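(* Let $\mathcal F=\{D_4,P\}$, where $D_4\in\{0,1\}^{4\times4}$ has support $\{(1,1),(2,2),(3,3),(4,4)\}$ and $P\in\{0,1\}^{4\times3}$ has support $\{(1,2),(2,1),(3,2),(4,3)\}$. Then the class $\mathrm{Av}(\mathcal F)$ is row-bounded but not column-bounded.
   Context: All matrices are binary; rows numbered top to bottom, columns left to right; $(i,j)$ is the entry in row $i$, column $j$; $(a,b]=\{a+1,\dots,b\}$. A pattern $P\in\{0,1\}^{k\times\ell}$ is an interval minor of $M\in\{0,1\}^{m\times n}$ if there are integers $0=r_0<\dots<r_k=m$ and $0=c_0<\dots<c_\ell=n$ such that for each 1-entry $(i,j)$ of $P$ the submatrix of $M$ on rows $(r_{i-1},r_i]$ and columns $(c_{j-1},c_j]$ contains a 1-entry; otherwise $M$ avoids $P$. For a set $\mathcal F$ of patterns, $\mathrm{Av}(\mathcal F)$ is the set of binary matrices avoiding every pattern in $\mathcal F$. $M\in\mathcal C$ is critical for $\mathcal C$ if changing any single 0-entry of $M$ into a 1-entry yields a matrix not in $\mathcal C$. A 0-run is a maximal set of consecutive 0-entries within a single row or a single column; the complexity of a line is the number of 0-runs in it. $\mathcal C$ is row-bounded (column-bounded) if the supremum over all matrices critical for $\mathcal C$ of the maximum complexity of a row (column) is finite. *)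

theory Defs
  imports Main
begin

text \<open>A binary matrix: (number of rows m, number of columns n, entries).
  Entry (i,j) with 1 <= i <= m, 1 <= j <= n is a 1-entry iff the entry function gives True.
  Values outside that range are irrelevant.\<close>
type_synonym bmat = "nat \<times> nat \<times> (nat \<Rightarrow> nat \<Rightarrow> bool)"

definition nrows :: "bmat \<Rightarrow> nat" where "nrows M = fst M"
definition ncols :: "bmat \<Rightarrow> nat" where "ncols M = fst (snd M)"
definition ent :: "bmat \<Rightarrow> nat \<Rightarrow> nat \<Rightarrow> bool" where "ent M = snd (snd M)"

definition interval_minor :: "bmat \<Rightarrow> bmat \<Rightarrow> bool" where
  "interval_minor P M \<longleftrightarrow>
     (\<exists>r c :: nat \<Rightarrow> nat.
        r 0 = 0 \<and> r (nrows P) = nrows M \<and> (\<forall>i < nrows P. r i < r (Suc i)) \<and>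
        c 0 = 0 \<and> c (ncols P) = ncols M \<and> (\<forall>j < ncols P. c j < c (Suc j)) \<and>
        (\<forall>i \<in> {1..nrows P}. \<forall>j \<in> {1..ncols P}. ent P i j \<longrightarrow>
           (\<exists>a \<in> {r (i - 1)<..r i}. \<exists>b \<in> {c (j - 1)<..c j}. ent M a b)))"

definition Av :: "bmat set \<Rightarrow> bmat set" where
  "Av F = {M. \<forall>P \<in> F. \<not> interval_minor P M}"

definition set_one :: "bmat \<Rightarrow> nat \<Rightarrow> nat \<Rightarrow> bmat" where
  "set_one M i j = (nrows M, ncols M, (ent M)(i := (ent M i)(j := True)))"

definition critical :: "bmat set \<Rightarrow> bmat \<Rightarrow> bool" where
  "critical C M \<longleftrightarrow> M \<in> C \<and>
     (\<forall>i \<in> {1..nrows M}. \<forall>j \<in> {1..ncols M}. \<not> ent M i j \<longrightarrow> set_one M i j \<notin> C)"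

definition row_zero_runs :: "bmat \<Rightarrow> nat \<Rightarrow> nat set set" where
  "row_zero_runs M i = {{a..b} | a b. 1 \<le> a \<and> a \<le> b \<and> b \<le> ncols M \<and>
      (\<forall>j \<in> {a..b}. \<not> ent M i j) \<and>
      (a = 1 \<or> ent M i (a - 1)) \<and> (b = ncols M \<or> ent M i (b + 1))}"

definition col_zero_runs :: "bmat \<Rightarrow> nat \<Rightarrow> nat set set" where
  "col_zero_runs M j = {{a..b} | a b. 1 \<le> a \<and> a \<le> b \<and> b \<le> nrows M \<and>
      (\<forall>i \<in> {a..b}. \<not> ent M i j) \<and>
      (a = 1 \<or> ent M (a - 1) j) \<and> (b = nrows M \<or> ent M (b + 1) j)}"

definition row_complexity :: "bmat \<Rightarrow> nat \<Rightarrow> nat" where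
  "row_complexity M i = card (row_zero_runs M i)"

definition col_complexity :: "bmat \<Rightarrow> nat \<Rightarrow> nat" where
  "col_complexity M j = card (col_zero_runs M j)"

definition row_bounded :: "bmat set \<Rightarrow> bool" where
  "row_bounded C \<longleftrightarrow> (\<exists>B::nat. \<forall>M. critical C M \<longrightarrow>
      (\<forall>i \<in> {1..nrows M}. row_complexity M i \<le> B))"

definition col_bounded :: "bmat set \<Rightarrow> bool" where
  "col_bounded C \<longleftrightarrow> (\<exists>B::nat. \<forall>M. critical C M \<longrightarrow>
      (\<forall>j \<in> {1..ncols M}. col_complexity M j \<le> B))"

definition D4 :: bmat where
  "D4 = (4, 4, \<lambda>i j. (i, j) \<in> {(1,1), (2,2), (3,3), (4,4)})"

definition Ppat :: bmat where
  "Ppat = (4, 3, \<lambda>i j. (i, j) \<in> {(1,2), (2,1), (3,2), (4,3)})"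

end

theory Submission
  imports Defs
begin

text \<open>A matrix avoids \<open>D4\<close> iff it has no increasing chain of four 1-entries, and avoids \<open>P\<close>
  iff it has no occurrence of \<open>P\<close> as a pattern of 1-entries. Let \<open>M\<close> be critical and let
  \<open>(i, x)\<close> be a 0-entry of row \<open>i\<close> lying between 1-entries of that row. Turning it into a 1 creates
  a forbidden pattern through \<open>(i, x)\<close>; in almost every role the new entry could be replaced by a
  neighbouring 1-entry of row \<open>i\<close>, which is impossible in \<open>M\<close>. The remaining roles leave behind
  short increasing chains of 1-entries to the upper left and lower right of \<open>(i, x)\<close>, or a
  descending pair above row \<open>i\<close>. For three consecutive inner 0-runs of a row, these witnesses
  together with a 1-entry of row \<open>i\<close> between the runs form \<open>D4\<close> or \<open>P\<close>; hence a critical row has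
  at most five 0-runs.

  Conversely, in the matrices \<open>comb t\<close> below, which avoid both patterns, every 0-entry of the
  first column at an even row completes a copy of \<open>P\<close>. So in every critical extension the first
  column keeps its \<open>t\<close> isolated 0-entries.\<close>

lemma ent_set_one:
  "nrows (set_one M i j) = nrows M" "ncols (set_one M i j) = ncols M"
  "ent (set_one M i j) a b \<longleftrightarrow> ent M a b \<or> (a = i \<and> b = j)"
  by (auto simp: set_one_def nrows_def ncols_def ent_def)

fun inc_chain :: "bmat \<Rightarrow> nat \<Rightarrow> nat \<Rightarrow> nat \<Rightarrow> nat \<Rightarrow> nat \<Rightarrow> bool" where
  "inc_chain M 0 a b c d \<longleftrightarrow> True"
| "inc_chain M (Suc k) a b c d \<longleftrightarrow>
     (\<exists>a' b'. a < a' \<and> a' < c \<and> b < b' \<and> b' < d \<and> ent M a' b' \<and> inc_chain M k a' b' c d)"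

lemma inc_chain_mono:
  assumes "inc_chain M k a b c d" "a' \<le> a" "b' \<le> b" "c \<le> c'" "d \<le> d'"
  shows "inc_chain M k a' b' c' d'"
  using assms
proof (induction k arbitrary: a b a' b')
  case (Suc k)
  then obtain i x where "a < i" "i < c" "b < x" "x < d" "ent M i x" "inc_chain M k i x c d"
    by auto
  moreover from this have "inc_chain M k i x c' d'"
    using Suc by blast
  ultimately show ?case
    using Suc.prems by (auto intro: less_le_trans le_less_trans)
qed simp

lemma inc_chain_shorter:
  assumes "inc_chain M k' a b c d" "k \<le> k'"
  shows "inc_chain M k a b c d"
  using assms
proof (induction k arbitrary: k' a b)
  case (Suc k)
  then obtain k'' where "k' = Suc k''" "k \<le> k''"
    by (metis Suc_le_D Suc_le_mono)
  with Suc.prems(1) obtain a' b' where "a < a'" "a' < c" "b < b'" "b' < d" "ent M a' b'"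
      "inc_chain M k'' a' b' c d"
    by auto
  with Suc.IH[of k'' a' b'] \<open>k \<le> k''\<close> show ?case
    by auto
qed simp

lemma inc_chain_append:
  assumes "inc_chain M j a b i x" "a < i" "b < x" "i < c" "x < d" "ent M i x"
    "inc_chain M k i x c d"
  shows "inc_chain M (j + Suc k) a b c d"
  using assms
proof (induction j arbitrary: a b)
  case (Suc j)
  from Suc.prems(1) obtain i' x' where first: "a < i'" "i' < i" "b < x'" "x' < x" "ent M i' x'"
      and rest: "inc_chain M j i' x' i x"
    by auto
  have "inc_chain M (j + Suc k) i' x' c d"
    using Suc.IH[OF rest first(2,4)] Suc.prems(4-7) .
  with first Suc.prems(4,5) show ?case
    by (simp only: add_Suc inc_chain.simps(2)[of M "j + Suc k"]) (meson order.strict_trans)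
qed auto

lemma inc_chain_set_one:
  assumes "inc_chain (set_one M i x) k a b c d"
  shows "inc_chain M k a b c d \<or>
    (\<exists>j l. k = j + Suc l \<and> a < i \<and> b < x \<and> i < c \<and> x < d \<and>
       inc_chain M j a b i x \<and> inc_chain M l i x c d)"
  using assms
proof (induction k arbitrary: a b)
  case (Suc k)
  then obtain i' x' where box: "a < i'" "i' < c" "b < x'" "x' < d"
    and one: "ent M i' x' \<or> (i' = i \<and> x' = x)" and rest: "inc_chain (set_one M i x) k i' x' c d"
    by (auto simp: ent_set_one)
  from Suc.IH[OF rest] show ?case
  proof
    assume tail: "inc_chain M k i' x' c d"
    show ?thesis
    proof (cases "ent M i' x'")
      case True
      with box tail show ?thesis by auto
    next
      case False
      with one box tail have "Suc k = 0 + Suc k \<and> a < i \<and> b < x \<and> i < c \<and> x < d \<and>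
          inc_chain M 0 a b i x \<and> inc_chain M k i x c d" by auto
      then show ?thesis by blast
    qed
  next
    assume "\<exists>j l. k = j + Suc l \<and> i' < i \<and> x' < x \<and> i < c \<and> x < d \<and>
       inc_chain M j i' x' i x \<and> inc_chain M l i x c d"
    then obtain j l where jl: "k = j + Suc l" "i' < i" "x' < x" "i < c" "x < d"
      "inc_chain M j i' x' i x" "inc_chain M l i x c d" by blast
    with box one have "Suc k = Suc j + Suc l \<and> a < i \<and> b < x \<and> i < c \<and> x < d \<and>
        inc_chain M (Suc j) a b i x \<and> inc_chain M l i x c d" by auto
    then show ?thesis by blast
  qed
qed simp

text \<open>Rows and columns are numbered from 1, so the box \<open>(0, nrows M + 1) \<times> (0, ncols M + 1)\<close> is
  the whole matrix.\<close>

abbreviation chain_above :: "bmat \<Rightarrow> nat \<Rightarrow> nat \<Rightarrow> nat \<Rightarrow> bool" where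
  "chain_above M k i x \<equiv> inc_chain M k 0 0 i x"

abbreviation chain_below :: "bmat \<Rightarrow> nat \<Rightarrow> nat \<Rightarrow> nat \<Rightarrow> bool" where
  "chain_below M k i x \<equiv> inc_chain M k i x (Suc (nrows M)) (Suc (ncols M))"

lemma chain_through_one:
  assumes "chain_above M j i x" "x \<le> u" "ent M i u" "u \<le> x'" "chain_below M l i x'"
    "0 < i" "i \<le> nrows M" "0 < u" "u \<le> ncols M"
  shows "chain_below M (j + Suc l) 0 0"
proof (rule inc_chain_append)
  show "chain_above M j i u"
    by (rule inc_chain_mono[OF assms(1)]) (use assms(2) in auto)
  show "chain_below M l i u"
    by (rule inc_chain_mono[OF assms(5)]) (use assms(4) in auto)
qed (use assms in auto)

text \<open>The new 1-entry is neither first nor last in the chain: there the neighbours \<open>(i, uL)\<close>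
  and \<open>(i, uR)\<close> could take its place.\<close>

lemma new_chain_through_zero:
  assumes "\<not> chain_below M k 0 0" "chain_below (set_one M i x) k 0 0"
    "0 < i" "i \<le> nrows M" "0 < uL" "uL < x" "x < uR" "uR \<le> ncols M" "ent M i uL" "ent M i uR"
  obtains j l where "k = j + Suc l" "0 < j" "0 < l" "chain_above M j i x" "chain_below M l i x"
proof -
  have "inc_chain (set_one M i x) k 0 0 (Suc (nrows M)) (Suc (ncols M))"
    using assms(2) by (simp add: ent_set_one)
  from inc_chain_set_one[OF this] assms(1) obtain j l where
    jl: "k = j + Suc l" "chain_above M j i x" "chain_below M l i x"
    by blast
  moreover have "j \<noteq> 0"
  proof
    assume "j = 0"
    with jl assms have "chain_below M k 0 0"
      using chain_through_one[of M 0 i uL uL x l] by simp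
    with assms(1) show False ..
  qed
  moreover have "l \<noteq> 0"
  proof
    assume "l = 0"
    with jl assms have "chain_below M k 0 0"
      using chain_through_one[of M j i x uR uR 0] by simp
    with assms(1) show False ..
  qed
  ultimately show ?thesis
    using that by blast
qed

lemma interval_minor_mono:
  assumes "interval_minor P M" "nrows N = nrows M" "ncols N = ncols M"
    "\<And>a b. ent M a b \<Longrightarrow> ent N a b"
  shows "interval_minor P N"
  using assms unfolding interval_minor_def by (metis (no_types, lifting))

definition one_entries :: "bmat \<Rightarrow> (nat \<times> nat) set" where
  "one_entries M = {(a, b). a \<in> {1..nrows M} \<and> b \<in> {1..ncols M} \<and> ent M a b}"

lemma one_entries_subset: "one_entries M \<subseteq> {1..nrows M} \<times> {1..ncols M}"
  by (auto simp: one_entries_def)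

lemma card_one_entries_le: "card (one_entries M) \<le> nrows M * ncols M"
  using card_mono[OF _ one_entries_subset] by simp

lemma card_one_entries_set_one:
  assumes "i \<in> {1..nrows M}" "j \<in> {1..ncols M}" "\<not> ent M i j"
  shows "card (one_entries (set_one M i j)) = Suc (card (one_entries M))"
proof -
  have "one_entries (set_one M i j) = insert (i, j) (one_entries M)"
    using assms by (auto simp: one_entries_def ent_set_one)
  moreover have "finite (one_entries M)"
    using finite_subset[OF one_entries_subset] by simp
  ultimately show ?thesis
    using assms by (simp add: one_entries_def)
qed

lemma critical_extension:
  assumes "M \<in> C"
  obtains N where "critical C N" "nrows N = nrows M" "ncols N = ncols M"
    "\<And>a b. ent M a b \<Longrightarrow> ent N a b"
proof -
  define S where "S = {N. N \<in> C \<and> nrows N = nrows M \<and> ncols N = ncols M \<and>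
    (\<forall>a b. ent M a b \<longrightarrow> ent N a b)}"
  have "\<exists>N. N \<in> S \<and> (\<forall>N'. N' \<in> S \<longrightarrow> card (one_entries N') \<le> card (one_entries N))"
  proof (rule ex_has_greatest_nat)
    show "M \<in> S" using assms by (simp add: S_def)
    show "\<forall>N. N \<in> S \<longrightarrow> card (one_entries N) < Suc (nrows M * ncols M)"
      using card_one_entries_le by (metis (mono_tags) S_def le_imp_less_Suc mem_Collect_eq)
  qed
  then obtain N where N: "N \<in> S" and max: "\<And>N'. N' \<in> S \<Longrightarrow> card (one_entries N') \<le> card (one_entries N)"
    by blast
  have "critical C N"
    unfolding critical_def
  proof (intro conjI ballI impI)
    show "N \<in> C" using N by (simp add: S_def)
    fix i j assume zero: "i \<in> {1..nrows N}" "j \<in> {1..ncols N}" "\<not> ent N i j"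
    show "set_one N i j \<notin> C"
    proof
      assume "set_one N i j \<in> C"
      with N have "set_one N i j \<in> S" by (auto simp: S_def ent_set_one)
      with max card_one_entries_set_one[OF zero] show False by fastforce
    qed
  qed
  with N that show ?thesis by (simp add: S_def)
qed

lemma finite_col_zero_runs: "finite (col_zero_runs M j)"
proof (rule finite_subset)
  show "col_zero_runs M j \<subseteq> (\<lambda>(a, b). {a..b}) ` ({0..nrows M} \<times> {0..nrows M})"
    by (force simp: col_zero_runs_def)
qed simp

lemma card_isolated_zeros_le_col_complexity:
  assumes "\<And>i. i \<in> S \<Longrightarrow> 1 < i \<and> i < nrows M \<and> \<not> ent M i j \<and> ent M (i - 1) j \<and> ent M (i + 1) j"
  shows "card S \<le> col_complexity M j"
proof -
  have "(\<lambda>i. {i..i}) ` S \<subseteq> col_zero_runs M j"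
  proof
    fix R assume "R \<in> (\<lambda>i. {i..i}) ` S"
    then obtain i where "i \<in> S" "R = {i..i}" by blast
    with assms[of i] show "R \<in> col_zero_runs M j"
      unfolding col_zero_runs_def by (intro CollectI exI[of _ i]) auto
  qed
  moreover have "inj_on (\<lambda>i. {i..i}) S"
    by (rule inj_onI) simp
  ultimately show ?thesis
    unfolding col_complexity_def by (metis card_image card_mono finite_col_zero_runs)
qed

definition row_run_starts :: "bmat \<Rightarrow> nat \<Rightarrow> nat set" where
  "row_run_starts M i = {a \<in> {1..ncols M}. \<not> ent M i a \<and> (a = 1 \<or> ent M i (a - 1))}"

lemma row_zero_run_determined_by_start:
  assumes "{a..b} \<in> row_zero_runs M i" "{a..b'} \<in> row_zero_runs M i" "a \<le> b" "a \<le> b'"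
  shows "b = b'"
proof (rule ccontr)
  have run: "a \<le> b" "b \<le> ncols M" "\<forall>j \<in> {a..b}. \<not> ent M i j" "b = ncols M \<or> ent M i (b + 1)"
    if "{a..b} \<in> row_zero_runs M i" "a \<le> b" for b
    using that unfolding row_zero_runs_def by (auto simp: Icc_eq_Icc)
  assume "b \<noteq> b'"
  then consider "b < b'" | "b' < b" by linarith
  then show False
    by cases (use run[OF assms(1,3)] run[OF assms(2,4)] in \<open>fastforce+\<close>)
qed

lemma row_complexity_le_card_run_starts: "row_complexity M i \<le> card (row_run_starts M i)"
  unfolding row_complexity_def
proof (rule card_inj_on_le)
  have start: "\<exists>b. R = {Min R..b} \<and> Min R \<le> b \<and> Min R \<in> row_run_starts M i"
    if "R \<in> row_zero_runs M i" for R
  proof -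
    from that obtain a b where "R = {a..b}" "a \<le> b" "a \<in> row_run_starts M i"
      unfolding row_zero_runs_def row_run_starts_def by auto
    moreover from this have "Min R = a"
      by (intro Min_eqI) auto
    ultimately show ?thesis by auto
  qed
  show "inj_on Min (row_zero_runs M i)"
    by (rule inj_onI) (metis start row_zero_run_determined_by_start)
  show "Min ` row_zero_runs M i \<subseteq> row_run_starts M i"
    using start by blast
  show "finite (row_run_starts M i)"
    unfolding row_run_starts_def by simp
qed

lemma D4_simps:
  "nrows D4 = 4" "ncols D4 = 4" "ent D4 i j \<longleftrightarrow> i = j \<and> i \<in> {1, 2, 3, 4}"
  by (auto simp: D4_def nrows_def ncols_def ent_def)

lemma ent_in_box:
  "ent M a b \<Longrightarrow> lo < a \<Longrightarrow> a \<le> hi \<Longrightarrow> lo' < b \<Longrightarrow> b \<le> hi' \<Longrightarrow>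
    \<exists>a\<in>{lo<..hi}. \<exists>b\<in>{lo'<..hi'}. ent M a b"
  by (meson greaterThanAtMost_iff)

lemma interval_minor_D4_iff: "interval_minor D4 M \<longleftrightarrow> chain_below M 4 0 0"
proof
  assume "interval_minor D4 M"
  then obtain r c where r: "r 0 = 0" "r 4 = nrows M" "\<forall>i<4. r i < r (Suc i)"
    and c: "c 0 = 0" "c 4 = ncols M" "\<forall>j<4. c j < c (Suc j)"
    and minor: "\<forall>i\<in>{1..4}. \<forall>j\<in>{1..4}. ent D4 i j \<longrightarrow>
              (\<exists>a\<in>{r (i - 1)<..r i}. \<exists>b\<in>{c (j - 1)<..c j}. ent M a b)"
    unfolding interval_minor_def D4_simps(1,2) by blast
  have blocks: "\<exists>a\<in>{r (i - 1)<..r i}. \<exists>b\<in>{c (i - 1)<..c i}. ent M a b"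
    if "i \<in> {1, 2, 3, 4}" for i
    by (rule minor[rule_format]) (use that in \<open>auto simp: D4_simps\<close>)
  have "r 0 < r 1" "r 1 < r 2" "r 2 < r 3" "r 3 < r 4" "c 0 < c 1" "c 1 < c 2" "c 2 < c 3" "c 3 < c 4"
    using r(3) c(3) by (auto simp: numeral_eq_Suc)
  moreover obtain a1 b1 a2 b2 a3 b3 a4 b4 where
    "a1 \<in> {r 0<..r 1}" "b1 \<in> {c 0<..c 1}" and "ent M a1 b1"
    and "a2 \<in> {r 1<..r 2}" "b2 \<in> {c 1<..c 2}" and "ent M a2 b2"
    and "a3 \<in> {r 2<..r 3}" "b3 \<in> {c 2<..c 3}" and "ent M a3 b3"
    and "a4 \<in> {r 3<..r 4}" "b4 \<in> {c 3<..c 4}" and "ent M a4 b4"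
    using blocks[of 1] blocks[of 2] blocks[of 3] blocks[of 4] by (auto simp: numeral_eq_Suc)
  ultimately have "0 < a1" "a1 < a2" "a2 < a3" "a3 < a4" "a4 < Suc (nrows M)"
    "0 < b1" "b1 < b2" "b2 < b3" "b3 < b4" "b4 < Suc (ncols M)"
    and "ent M a1 b1" "ent M a2 b2" "ent M a3 b3" "ent M a4 b4"
    using r(1,2) c(1,2) by auto
  then show "chain_below M 4 0 0"
    by (simp add: numeral_eq_Suc) (meson order.strict_trans)
next
  assume "chain_below M 4 0 0"
  then obtain a1 b1 a2 b2 a3 b3 a4 b4 where
    order: "0 < a1" "a1 < a2" "a2 < a3" "a3 < a4" "a4 \<le> nrows M"
      "0 < b1" "b1 < b2" "b2 < b3" "b3 < b4" "b4 \<le> ncols M"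
    and ones: "ent M a1 b1" "ent M a2 b2" "ent M a3 b3" "ent M a4 b4"
    by (auto simp: numeral_eq_Suc)
  define r where "r = (!) [0, a1, a2, a3, nrows M]"
  define c where "c = (!) [0, b1, b2, b3, ncols M]"
  show "interval_minor D4 M"
    unfolding interval_minor_def D4_simps(1,2)
  proof (rule exI[of _ r], rule exI[of _ c], intro conjI ballI impI allI)
    fix i j assume "i \<in> {1..4}" "j \<in> {1..4}" "ent D4 i j"
    then consider "i = 1" "j = 1" | "i = 2" "j = 2" | "i = 3" "j = 3" | "i = 4" "j = 4"
      by (auto simp: D4_simps)
    then show "\<exists>a\<in>{r (i - 1)<..r i}. \<exists>b\<in>{c (j - 1)<..c j}. ent M a b"
    proof cases
      case 1 with ones(1) order show ?thesis
        by (intro ent_in_box[of M a1 b1]) (auto simp: r_def c_def numeral_eq_Suc)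
    next
      case 2 with ones(2) order show ?thesis
        by (intro ent_in_box[of M a2 b2]) (auto simp: r_def c_def numeral_eq_Suc)
    next
      case 3 with ones(3) order show ?thesis
        by (intro ent_in_box[of M a3 b3]) (auto simp: r_def c_def numeral_eq_Suc)
    next
      case 4 with ones(4) order show ?thesis
        by (intro ent_in_box[of M a4 b4]) (auto simp: r_def c_def numeral_eq_Suc)
    qed
  qed (use order in \<open>auto simp: r_def c_def numeral_eq_Suc less_Suc_eq\<close>)

qed

definition Ppat_occurrence :: "bmat \<Rightarrow> bool" where
  "Ppat_occurrence M \<longleftrightarrow> (\<exists>a1 b1 a2 b2 a3 b3 a4 b4.
     0 < a1 \<and> a1 < a2 \<and> a2 < a3 \<and> a3 < a4 \<and> a4 \<le> nrows M \<and>
     0 < b2 \<and> b2 < b1 \<and> b2 < b3 \<and> b1 < b4 \<and> b3 < b4 \<and> b4 \<le> ncols M \<and>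
     ent M a1 b1 \<and> ent M a2 b2 \<and> ent M a3 b3 \<and> ent M a4 b4)"

lemma Ppat_occurrenceI:
  assumes "0 < a1" "a1 < a2" "a2 < a3" "a3 < a4" "a4 \<le> nrows M"
    "0 < b2" "b2 < b1" "b2 < b3" "b1 < b4" "b3 < b4" "b4 \<le> ncols M"
    "ent M a1 b1" "ent M a2 b2" "ent M a3 b3" "ent M a4 b4"
  shows "Ppat_occurrence M"
  unfolding Ppat_occurrence_def using assms by blast

lemma Ppat_simps:
  "nrows Ppat = 4" "ncols Ppat = 3"
  "ent Ppat i j \<longleftrightarrow> (i, j) \<in> {(1, 2), (2, 1), (3, 2), (4, 3)}"
  by (auto simp: Ppat_def nrows_def ncols_def ent_def)

lemma interval_minor_Ppat_iff: "interval_minor Ppat M \<longleftrightarrow> Ppat_occurrence M"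
proof
  assume "interval_minor Ppat M"
  then obtain r c where r: "r 0 = 0" "r 4 = nrows M" "\<forall>i<4. r i < r (Suc i)"
    and c: "c 0 = 0" "c 3 = ncols M" "\<forall>j<3. c j < c (Suc j)"
    and minor: "\<forall>i\<in>{1..4}. \<forall>j\<in>{1..3}. ent Ppat i j \<longrightarrow>
              (\<exists>a\<in>{r (i - 1)<..r i}. \<exists>b\<in>{c (j - 1)<..c j}. ent M a b)"
    unfolding interval_minor_def Ppat_simps(1,2) by blast
  have block: "\<exists>a\<in>{r (i - 1)<..r i}. \<exists>b\<in>{c (j - 1)<..c j}. ent M a b"
    if "(i, j) \<in> {(1, 2), (2, 1), (3, 2), (4, 3)}" for i j
    by (rule minor[rule_format]) (use that in \<open>auto simp: Ppat_simps\<close>)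
  have "r 0 < r 1" "r 1 < r 2" "r 2 < r 3" "r 3 < r 4" "c 0 < c 1" "c 1 < c 2" "c 2 < c 3"
    using r(3) c(3) by (auto simp: numeral_eq_Suc)
  moreover obtain a1 b1 a2 b2 a3 b3 a4 b4 where
    "a1 \<in> {r 0<..r 1}" "b1 \<in> {c 1<..c 2}" and "ent M a1 b1"
    and "a2 \<in> {r 1<..r 2}" "b2 \<in> {c 0<..c 1}" and "ent M a2 b2"
    and "a3 \<in> {r 2<..r 3}" "b3 \<in> {c 1<..c 2}" and "ent M a3 b3"
    and "a4 \<in> {r 3<..r 4}" "b4 \<in> {c 2<..c 3}" and "ent M a4 b4"
    using block[of 1 2] block[of 2 1] block[of 3 2] block[of 4 3] by (auto simp: numeral_eq_Suc)
  ultimately show "Ppat_occurrence M"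
    using r(1,2) c(1,2) by (intro Ppat_occurrenceI[of a1 a2 a3 a4 M b2 b1 b3 b4]) auto
next
  assume "Ppat_occurrence M"
  then obtain a1 b1 a2 b2 a3 b3 a4 b4 where
    order: "0 < a1" "a1 < a2" "a2 < a3" "a3 < a4" "a4 \<le> nrows M"
      "0 < b2" "b2 < b1" "b2 < b3" "b1 < b4" "b3 < b4" "b4 \<le> ncols M"
    and ones: "ent M a1 b1" "ent M a2 b2" "ent M a3 b3" "ent M a4 b4"
    unfolding Ppat_occurrence_def by blast
  define r where "r = (!) [0, a1, a2, a3, nrows M]"
  define c where "c = (!) [0, b2, max b1 b3, ncols M]"
  show "interval_minor Ppat M"
    unfolding interval_minor_def Ppat_simps(1,2)
  proof (rule exI[of _ r], rule exI[of _ c], intro conjI ballI impI allI)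
    fix i j assume "i \<in> {1..4}" "j \<in> {1..3}" "ent Ppat i j"
    then consider "i = 1" "j = 2" | "i = 2" "j = 1" | "i = 3" "j = 2" | "i = 4" "j = 3"
      by (auto simp: Ppat_simps)
    then show "\<exists>a\<in>{r (i - 1)<..r i}. \<exists>b\<in>{c (j - 1)<..c j}. ent M a b"
    proof cases
      case 1 with ones(1) order show ?thesis
        by (intro ent_in_box[of M a1 b1]) (auto simp: r_def c_def numeral_eq_Suc)
    next
      case 2 with ones(2) order show ?thesis
        by (intro ent_in_box[of M a2 b2]) (auto simp: r_def c_def numeral_eq_Suc)
    next
      case 3 with ones(3) order show ?thesis
        by (intro ent_in_box[of M a3 b3]) (auto simp: r_def c_def numeral_eq_Suc)
    next
      case 4 with ones(4) order show ?thesis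
        by (intro ent_in_box[of M a4 b4]) (auto simp: r_def c_def numeral_eq_Suc)
    qed
  qed (use order in \<open>auto simp: r_def c_def numeral_eq_Suc less_Suc_eq\<close>)
qed

lemma Av_D4_Ppat_iff: "M \<in> Av {D4, Ppat} \<longleftrightarrow> \<not> chain_below M 4 0 0 \<and> \<not> Ppat_occurrence M"
  by (simp add: Av_def interval_minor_D4_iff interval_minor_Ppat_iff)

definition inversion_above :: "bmat \<Rightarrow> nat \<Rightarrow> nat \<Rightarrow> bool" where
  "inversion_above M i u \<longleftrightarrow> (\<exists>a1 b1 a2 b2. 0 < a1 \<and> a1 < a2 \<and> a2 < i \<and>
     0 < b2 \<and> b2 < b1 \<and> b1 < u \<and> ent M a1 b1 \<and> ent M a2 b2)"

lemma Ppat_occurrence_of_inversion_above: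
  assumes "inversion_above M i u" "ent M i u" "u < x" "chain_below M 1 i x"
  shows "Ppat_occurrence M"
proof -
  from assms(1) obtain a1 b1 a2 b2 where
    "0 < a1" "a1 < a2" "a2 < i" "0 < b2" "b2 < b1" "b1 < u" "ent M a1 b1" "ent M a2 b2"
    unfolding inversion_above_def by blast
  moreover from assms(4) obtain a4 b4 where
    "i < a4" "a4 \<le> nrows M" "x < b4" "b4 \<le> ncols M" "ent M a4 b4"
    by auto
  ultimately show ?thesis
    using assms(2,3) by (intro Ppat_occurrenceI[of a1 a2 i a4 M b2 b1 u b4]) auto
qed

text \<open>In any other role than the third entry of \<open>P\<close>, the new 1-entry could be replaced by
  \<open>(i, uL)\<close> or \<open>(i, uR)\<close>, or would complete an increasing 4-chain with \<open>(i, u0)\<close>.\<close>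

lemma new_Ppat_through_zero:
  assumes "\<not> Ppat_occurrence M" "\<not> chain_below M 4 0 0" "Ppat_occurrence (set_one M i x)"
    "0 < i" "i \<le> nrows M" "0 < u0" "u0 < uL" "uL < x" "x < uR" "uR \<le> ncols M"
    "ent M i u0" "ent M i uL" "ent M i uR"
  shows "chain_below M 1 i x \<and> inversion_above M i uR"
proof -
  obtain a1 b1 a2 b2 a3 b3 a4 b4 where
    order: "0 < a1" "a1 < a2" "a2 < a3" "a3 < a4" "a4 \<le> nrows M"
      "0 < b2" "b2 < b1" "b2 < b3" "b1 < b4" "b3 < b4" "b4 \<le> ncols M"
    and ones: "ent M a1 b1 \<or> (a1 = i \<and> b1 = x)" "ent M a2 b2 \<or> (a2 = i \<and> b2 = x)"
      "ent M a3 b3 \<or> (a3 = i \<and> b3 = x)" "ent M a4 b4 \<or> (a4 = i \<and> b4 = x)"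
    using assms(3) unfolding Ppat_occurrence_def ent_set_one by blast
  have one1: "ent M a1 b1"
  proof (rule ccontr)
    assume "\<not> ent M a1 b1"
    with ones order have new: "a1 = i" "b1 = x" and old: "ent M a2 b2" "ent M a3 b3" "ent M a4 b4"
      by auto
    show False
    proof (cases "b2 < uL")
      case True
      with new old order assms have "Ppat_occurrence M"
        by (intro Ppat_occurrenceI[of i a2 a3 a4 M b2 uL b3 b4]) auto
      with assms(1) show False ..
    next
      case False
      with new order assms(5-7) have "0 < i" "i < a2" "a2 < a3" "a3 < a4" "a4 < Suc (nrows M)"
        "0 < u0" "u0 < b2" "b2 < b3" "b3 < b4" "b4 < Suc (ncols M)"
        by linarith+
      with old assms(11) have "chain_below M 4 0 0"
        by (simp add: numeral_eq_Suc) (meson order.strict_trans)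
      with assms(2) show False ..
    qed
  qed
  have one2: "ent M a2 b2"
  proof (rule ccontr)
    assume "\<not> ent M a2 b2"
    with ones order have "a2 = i" "b2 = x" "ent M a3 b3" "ent M a4 b4"
      by auto
    with one1 order assms have "Ppat_occurrence M"
      by (intro Ppat_occurrenceI[of a1 i a3 a4 M uL b1 b3 b4]) auto
    with assms(1) show False ..
  qed
  have one4: "ent M a4 b4"
  proof (rule ccontr)
    assume "\<not> ent M a4 b4"
    with ones order have "a4 = i" "b4 = x" "ent M a3 b3"
      by auto
    with one1 one2 order assms have "Ppat_occurrence M"
      by (intro Ppat_occurrenceI[of a1 a2 a3 i M b2 b1 b3 uR]) auto
    with assms(1) show False ..
  qed
  have new3: "a3 = i" "b3 = x"
    using ones(3) one1 one2 one4 order assms(1) by (auto intro: Ppat_occurrenceI)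
  have "b4 \<le> uR"
  proof (rule ccontr)
    assume "\<not> b4 \<le> uR"
    with new3 one1 one2 one4 order assms have "Ppat_occurrence M"
      by (intro Ppat_occurrenceI[of a1 a2 i a4 M b2 b1 uR b4]) auto
    with assms(1) show False ..
  qed
  with order have "b1 < uR" "a4 < Suc (nrows M)" "b4 < Suc (ncols M)"
    by linarith+
  with new3 one1 one2 one4 order show ?thesis
    unfolding inversion_above_def by simp blast
qed

lemma zero_in_critical_row:
  assumes "critical (Av {D4, Ppat}) M" "0 < i" "i \<le> nrows M"
    "0 < u0" "u0 < uL" "uL < x" "x < uR" "uR \<le> ncols M"
    "ent M i u0" "ent M i uL" "ent M i uR" "\<not> ent M i x"
  shows "chain_below M 1 i x \<and>
    (chain_above M 1 i x \<and> chain_below M 2 i x \<or> chain_above M 2 i x \<or> inversion_above M i uR)"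
proof -
  from assms(1) have avoid: "\<not> chain_below M 4 0 0" "\<not> Ppat_occurrence M"
    by (simp_all add: critical_def Av_D4_Ppat_iff)
  from assms(1-3,6-8,12) have "set_one M i x \<notin> Av {D4, Ppat}"
    unfolding critical_def by auto
  then consider "chain_below (set_one M i x) 4 0 0" | "Ppat_occurrence (set_one M i x)"
    by (auto simp: Av_D4_Ppat_iff)
  then show ?thesis
  proof cases
    case 1
    obtain j l where "4 = j + Suc l" "0 < j" "0 < l" "chain_above M j i x" "chain_below M l i x"
      by (rule new_chain_through_zero[OF avoid(1) 1 assms(2,3) _ assms(6-8,10,11)])
        (use assms(4,5) in auto)
    moreover from this have "j = 1 \<and> l = 2 \<or> j = 2 \<and> l = 1"
      by arith
    ultimately show ?thesis
      using inc_chain_shorter[of M 2 i x _ _ 1] by auto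
  next
    case 2
    with assms avoid show ?thesis
      using new_Ppat_through_zero by blast
  qed
qed

lemma critical_row_no_three_gaps:
  assumes "critical (Av {D4, Ppat}) M" "0 < i" "i \<le> nrows M"
    "0 < u0" "u0 < u1" "u1 < x2" "x2 < u2" "u2 < x3" "x3 < u3" "u3 < x4" "x4 < u4" "u4 \<le> ncols M"
    "ent M i u0" "ent M i u1" "ent M i u2" "ent M i u3" "ent M i u4"
    "\<not> ent M i x2" "\<not> ent M i x3" "\<not> ent M i x4"
  shows False
proof -
  from assms(1) have avoid: "\<not> chain_below M 4 0 0" "\<not> Ppat_occurrence M"
    by (simp_all add: critical_def Av_D4_Ppat_iff)
  have no_D4: False
    if "chain_above M j i x" "x \<le> u" "ent M i u" "u \<le> x'" "chain_below M l i x'"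
      "j + Suc l = 4" "0 < u" "u \<le> ncols M" for j l x u x'
    using chain_through_one[OF that(1-5) assms(2,3) that(7,8), unfolded that(6)] avoid(1) by blast
  have at_x2: "chain_above M 1 i x2 \<and> chain_below M 2 i x2 \<or> chain_above M 2 i x2 \<or>
      inversion_above M i u2"
    using zero_in_critical_row[of M i u0 u1 x2 u2] assms by auto
  have at_x3: "chain_below M 1 i x3 \<and> (chain_above M 1 i x3 \<and> chain_below M 2 i x3 \<or>
      chain_above M 2 i x3 \<or> inversion_above M i u3)"
    using zero_in_critical_row[of M i u1 u2 x3 u3] assms by auto
  have at_x4: "chain_below M 1 i x4"
    using zero_in_critical_row[of M i u2 u3 x4 u4] assms by auto
  have "chain_above M 1 i x2"
    using at_x2 at_x3 no_D4[of 2 x2 u2 x3 1] Ppat_occurrence_of_inversion_above[of M i u2 x3] avoid(2) assms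
    by auto
  moreover have "chain_below M 2 i x3"
    using at_x3 at_x4 no_D4[of 2 x3 u3 x4 1] Ppat_occurrence_of_inversion_above[of M i u3 x4] avoid(2) assms
    by auto
  ultimately show False
    using no_D4[of 1 x2 u2 x3 2] assms by auto
qed

lemma row_complexity_critical_le_5:
  assumes "critical (Av {D4, Ppat}) M" "i \<in> {1..nrows M}"
  shows "row_complexity M i \<le> 5"
proof (rule ccontr)
  define L where "L = sorted_list_of_set (row_run_starts M i)"
  have fin: "finite (row_run_starts M i)"
    unfolding row_run_starts_def by simp
  assume "\<not> row_complexity M i \<le> 5"
  with row_complexity_le_card_run_starts[of M i] fin have len: "6 \<le> length L"
    by (simp add: L_def)
  have start: "L ! k \<in> row_run_starts M i" if "k < 6" for k
    using that len fin by (metis L_def order_less_le_trans nth_mem set_sorted_list_of_set)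
  have "sorted_wrt (<) L"
    unfolding L_def by (rule strict_sorted_list_of_set)
  then have less: "L ! j < L ! k" if "j < k" "k < 6" for j k
    using sorted_wrt_nth_less that len by fastforce
  have zero: "0 < L ! k" "L ! k \<le> ncols M" "\<not> ent M i (L ! k)" if "k < 6" for k
    using start[OF that] by (auto simp: row_run_starts_def)
  have one_before: "0 < L ! k - 1" "ent M i (L ! k - 1)" if "0 < k" "k < 6" for k
  proof -
    from less[of 0 k] zero(1)[of 0] that show "0 < L ! k - 1" by simp
    with start[OF that(2)] show "ent M i (L ! k - 1)"
      by (auto simp: row_run_starts_def)
  qed
  have gap: "L ! j < L ! k - 1" if "0 < j" "j < k" "k < 6" for j k
    using less[OF that(2,3)] zero(3)[of j] one_before(2)[of k] that
    by (metis Suc_pred' le_less less_Suc_eq_le not_gr_zero order_less_trans)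
  show False
    using assms(2)
    by (intro critical_row_no_three_gaps[OF assms(1), of i "L ! 1 - 1" "L ! 2 - 1" "L ! 2"
          "L ! 3 - 1" "L ! 3" "L ! 4 - 1" "L ! 4" "L ! 5 - 1"])
      (use one_before[of 1] one_before[of 2] one_before[of 3] one_before[of 4] one_before[of 5]
        zero[of 2] zero[of 3] zero[of 4] zero[of 5] gap[of 1 2] gap[of 2 3] gap[of 3 4] gap[of 4 5]
        in auto)
qed

definition comb :: "nat \<Rightarrow> bmat" where
  "comb t = (2 * t + 2, 2 * t + 3, \<lambda>a b.
     (odd a \<and> a \<le> 2 * t + 1 \<and> (b = 1 \<or> a + b = 2 * t + 3)) \<or>
     (even a \<and> 4 \<le> a \<and> a \<le> 2 * t + 2 \<and> a + b = 2 * t + 7))"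

lemma comb_simps:
  "nrows (comb t) = 2 * t + 2" "ncols (comb t) = 2 * t + 3"
  "ent (comb t) a b \<longleftrightarrow>
     (odd a \<and> a \<le> 2 * t + 1 \<and> (b = 1 \<or> a + b = 2 * t + 3)) \<or>
     (even a \<and> 4 \<le> a \<and> a \<le> 2 * t + 2 \<and> a + b = 2 * t + 7)"
  by (simp_all add: comb_def nrows_def ncols_def ent_def)

lemma comb_nothing_below_even_row:
  "ent (comb t) a b \<Longrightarrow> even a \<Longrightarrow> ent (comb t) a' b' \<Longrightarrow> a < a' \<Longrightarrow> b < b' \<Longrightarrow> False"
  unfolding comb_simps by presburger

lemma comb_below_is_even_row:
  "ent (comb t) a b \<Longrightarrow> 1 < b \<Longrightarrow> ent (comb t) a' b' \<Longrightarrow> a < a' \<Longrightarrow> b < b' \<Longrightarrow> even a'"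
  unfolding comb_simps by presburger

lemma comb_avoids_D4: "\<not> chain_below (comb t) 4 0 0"
proof
  assume "chain_below (comb t) 4 0 0"
  then obtain b1 a2 b2 a3 b3 a4 b4 where
    "0 < b1" "b1 < b2" "a2 < a3" "b2 < b3" "a3 < a4" "b3 < b4"
    "ent (comb t) a2 b2" "ent (comb t) a3 b3" "ent (comb t) a4 b4"
    by (auto simp: numeral_eq_Suc)
  then show False
    using comb_below_is_even_row[of t a2 b2 a3 b3] comb_nothing_below_even_row[of t a3 b3 a4 b4]
    by linarith
qed

lemma comb_avoids_Ppat: "\<not> Ppat_occurrence (comb t)"
proof
  assume "Ppat_occurrence (comb t)"
  then obtain a1 b1 a2 b2 a3 b3 a4 b4 where h: "0 < a1" "a1 < a2" "a2 < a3" "a3 < a4"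
     "0 < b2" "b2 < b1" "b2 < b3" "b1 < b4" "b3 < b4"
     "ent (comb t) a1 b1" "ent (comb t) a2 b2" "ent (comb t) a3 b3" "ent (comb t) a4 b4"
    unfolding Ppat_occurrence_def by blast
  have even4: "even a4" using comb_below_is_even_row[OF h(12) _ h(13)] h by linarith
  have odd3: "odd a3" using comb_nothing_below_even_row[OF h(12) _ h(13)] h by blast
  have s3: "a3 + b3 = 2 * t + 3" using h(12) odd3 h by (simp add: comb_simps)
  have s4: "a4 + b4 = 2 * t + 7" using h(13) even4 by (simp add: comb_simps)
  have e1: "(odd a1 \<and> a1 + b1 = 2 * t + 3) \<or> (even a1 \<and> a1 + b1 = 2 * t + 7)"
    using h(10) h by (auto simp: comb_simps)
  have e2: "(odd a2 \<and> (b2 = 1 \<or> a2 + b2 = 2 * t + 3)) \<or> (even a2 \<and> a2 + b2 = 2 * t + 7)"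
    using h(11) by (auto simp: comb_simps)
  show False
  proof (cases "even a1")
    case True
    with e1 s4 h(2-4,8) show False by linarith
  next
    case False
    with e1 have s1: "a1 + b1 = 2 * t + 3" by auto
    have "a4 < a1 + 4" using s1 s4 h(8) by linarith
    moreover have "a1 + 2 \<le> a3" using False odd3 h(2,3) by presburger
    ultimately have "a2 = a1 + 1" using h(2-4) by linarith
    with False e2 s1 h(6) show False by auto
  qed
qed

lemma comb_set_one_Ppat:
  assumes "1 \<le> s" "s \<le> t"
  shows "Ppat_occurrence (set_one (comb t) (2 * s) 1)"
  using assms
  by (intro Ppat_occurrenceI[of "2 * s - 1" "2 * s" "2 * s + 1" "2 * s + 2" _
        1 "2 * t + 4 - 2 * s" "2 * t + 2 - 2 * s" "2 * t + 5 - 2 * s"])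
    (auto simp: ent_set_one comb_simps)

lemma not_col_bounded_Av_D4_Ppat: "\<not> col_bounded (Av {D4, Ppat})"
proof
  assume "col_bounded (Av {D4, Ppat})"
  then obtain B where B: "\<And>N j. critical (Av {D4, Ppat}) N \<Longrightarrow> j \<in> {1..ncols N} \<Longrightarrow>
      col_complexity N j \<le> B"
    unfolding col_bounded_def by blast
  define t where "t = Suc B"
  have "comb t \<in> Av {D4, Ppat}"
    by (simp add: Av_D4_Ppat_iff comb_avoids_D4 comb_avoids_Ppat)
  then obtain N where N: "critical (Av {D4, Ppat}) N" "nrows N = 2 * t + 2" "ncols N = 2 * t + 3"
    and ext: "\<And>a b. ent (comb t) a b \<Longrightarrow> ent N a b"
    by (rule critical_extension) (auto simp: comb_simps)
  have "\<not> ent N (2 * s) 1" if "s \<in> {1..t}" for s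
  proof
    assume "ent N (2 * s) 1"
    with ext have ext': "\<And>a b. ent (set_one (comb t) (2 * s) 1) a b \<Longrightarrow> ent N a b"
      by (auto simp: ent_set_one)
    have "interval_minor Ppat (set_one (comb t) (2 * s) 1)"
      using comb_set_one_Ppat[of s t] that by (simp add: interval_minor_Ppat_iff)
    then have "interval_minor Ppat N"
      by (rule interval_minor_mono) (use N(2,3) ext' in \<open>simp_all add: ent_set_one comb_simps\<close>)
    with N(1) show False by (simp add: critical_def Av_def)
  qed
  moreover have "ent N (2 * s + 1) 1" "ent N (2 * s - 1) 1" if "s \<in> {1..t}" for s
    using that by (auto intro!: ext simp: comb_simps)
  ultimately have "card ((*) 2 ` {1..t}) \<le> col_complexity N 1"
    using N(2) by (intro card_isolated_zeros_le_col_complexity) auto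
  moreover have "col_complexity N 1 \<le> B"
    using B[OF N(1)] N(3) by simp
  moreover have "card ((*) 2 ` {1..t}) = t"
    by (simp add: card_image inj_on_def)
  ultimately show False
    by (simp add: t_def)
qed

theorem proposition4p1:
  shows "row_bounded (Av {D4, Ppat}) \<and> \<not> col_bounded (Av {D4, Ppat})"
proof
  show "row_bounded (Av {D4, Ppat})"
    unfolding row_bounded_def using row_complexity_critical_le_5 by blast
  show "\<not> col_bounded (Av {D4, Ppat})"
    by (rule not_col_bounded_Av_D4_Ppat)
qed

end
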